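(* Let $s(x)\in\Omega$ be a generalized power series with \[ \dim_{\mathbb{Q}}\frac{\langle\operatorname{supp}s(x)\cup\mathbb{Q}\rangle}{\mathbb{Q}}>n . \] Then $s(x)$ is not a solution of any nontrivial equation $P=0$ of order $n$ over the fraction field of the ring of Puiseux series, i.e. there is no non-zero $P\in K[y_0,\ldots,y_n]$ with $P(s(x),s'(x),\ldots,s^{(n)}(x))=0$, where $K=\bigcup_{d\ge1}\mathbb{C}((x^{1/d}))$.
   Context: $\Omega$ denotes the field of generalized power series $s(x)=\sum_{i\ge1}c_i x^{\mu_i}$ with $c_i\in\mathbb{C}$, $\mu_i\in\mathbb{R}$, $\mu_1<\mu_2<\cdots$ and $\mu_i\to\infty$ when there are infinitely many terms; $\operatorname{supp}s=\{\mu_i:c_i\ne0\}$. For $E\subset\mathbb{R}$, $\langle E\rangle$ is the $\mathbb{Q}$-linear span of $E$ in $\mathbb{R}$. The operator $'$ is one fixed choice among: (a) ordinary derivative $\frac{d}{dx}$; (b) Euler derivative $x\frac{d}{dx}$; (c) $q$-difference operator $s'(x)=s(qx)$, i.e. $\sum c_ix^{\mu_i}\mapsto\sum c_iq^{\mu_i}x^{\mu_i}$, for fixed $q\in\mathbb{C}$, $|q|\ne1$. $s^{(\kappa)}$ is the $\kappa$-th iterate of $'$. *)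

theory Defs
  imports "HOL-Analysis.Analysis"
begin

text \<open>A generalized power series sum c_i x^mu_i is represented by its coefficient
  function real => complex. Membership in Omega: the support meets every
  half-line (-inf, M] in a finite set (equivalently: the exponents can be listed
  as mu_1 < mu_2 < ... with mu_i -> infinity, or the support is finite).\<close>

type_synonym gser = "real \<Rightarrow> complex"

definition gsupp :: "gser \<Rightarrow> real set" where
  "gsupp s = {\<mu>. s \<mu> \<noteq> 0}"

definition Omega :: "gser set" where
  "Omega = {s. \<forall>M. finite {\<mu>. s \<mu> \<noteq> 0 \<and> \<mu> \<le> M}}"

definition gs_zero :: gser where "gs_zero = (\<lambda>_. 0)"

definition gs_one :: gser where "gs_one = (\<lambda>\<mu>. if \<mu> = 0 then 1 else 0)"

definition gs_mult :: "gser \<Rightarrow> gser \<Rightarrow> gser" where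
  "gs_mult a b = (\<lambda>\<mu>. \<Sum>\<nu>\<in>{\<nu>. a \<nu> \<noteq> 0 \<and> b (\<mu> - \<nu>) \<noteq> 0}. a \<nu> * b (\<mu> - \<nu>))"

definition gs_pow :: "gser \<Rightarrow> nat \<Rightarrow> gser" where
  "gs_pow a k = (gs_mult a ^^ k) gs_one"

text \<open>The field K of Puiseux (Laurent) series: union over d >= 1 of C((x^(1/d))),
  i.e. elements of Omega whose support lies in (1/d) Z for some d >= 1.\<close>

definition Puiseux :: "gser set" where
  "Puiseux = {s \<in> Omega. \<exists>d::nat. d \<ge> 1 \<and> (\<forall>\<mu>\<in>gsupp s. \<exists>k::int. \<mu> = real_of_int k / real d)}"

datatype gop = Deriv | Euler | QDiff complex

definition admissible_op :: "gop \<Rightarrow> bool" where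
  "admissible_op D = (case D of QDiff q \<Rightarrow> q \<noteq> 0 \<and> cmod q \<noteq> 1 | _ \<Rightarrow> True)"

text \<open>d/dx x^mu = mu x^(mu-1); x d/dx x^mu = mu x^mu; x^mu -> q^mu x^mu with
  q^mu = exp(mu Ln q) (principal branch).\<close>

fun gs_op :: "gop \<Rightarrow> gser \<Rightarrow> gser" where
  "gs_op Deriv s = (\<lambda>\<mu>. complex_of_real (\<mu> + 1) * s (\<mu> + 1))"
| "gs_op Euler s = (\<lambda>\<mu>. complex_of_real \<mu> * s \<mu>)"
| "gs_op (QDiff q) s = (\<lambda>\<mu>. exp (complex_of_real \<mu> * Ln q) * s \<mu>)"

text \<open>Differential (difference) polynomial P in y_0..y_n with coefficients in K,
  given as a finitely supported map from exponent vectors alpha (alpha i = 0 for i > n)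
  to coefficients.\<close>

definition diff_poly :: "nat \<Rightarrow> ((nat \<Rightarrow> nat) \<Rightarrow> gser) \<Rightarrow> bool" where
  "diff_poly n P \<longleftrightarrow> finite {\<alpha>. P \<alpha> \<noteq> gs_zero}
     \<and> (\<forall>\<alpha>. P \<alpha> \<noteq> gs_zero \<longrightarrow> (\<forall>i>n. \<alpha> i = 0))
     \<and> (\<forall>\<alpha>. P \<alpha> \<in> Puiseux)"

definition eval_diff_poly :: "gop \<Rightarrow> nat \<Rightarrow> ((nat \<Rightarrow> nat) \<Rightarrow> gser) \<Rightarrow> gser \<Rightarrow> gser" where
  "eval_diff_poly D n P s = (\<lambda>\<mu>. \<Sum>\<alpha>\<in>{\<alpha>. P \<alpha> \<noteq> gs_zero}.
      (foldr (\<lambda>i acc. gs_mult (gs_pow ((gs_op D ^^ i) s) (\<alpha> i)) acc) [0..<Suc n] (P \<alpha>)) \<mu>)"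

definition rat_span :: "real set \<Rightarrow> real set" where
  "rat_span E = {x. \<exists>F r. finite F \<and> F \<subseteq> E \<and> x = (\<Sum>e\<in>F. real_of_rat (r e) * e)}"

definition indep_mod_Q :: "nat \<Rightarrow> (nat \<Rightarrow> real) \<Rightarrow> bool" where
  "indep_mod_Q m v \<longleftrightarrow> (\<forall>r::nat \<Rightarrow> rat. (\<Sum>i<m. real_of_rat (r i) * v i) \<in> \<rat> \<longrightarrow> (\<forall>i<m. r i = 0))"

definition dim_mod_Q_gt :: "real set \<Rightarrow> nat \<Rightarrow> bool" where
  "dim_mod_Q_gt E m \<longleftrightarrow> (\<exists>v. (\<forall>i<Suc m. v i \<in> rat_span (E \<union> \<rat>)) \<and> indep_mod_Q (Suc m) v)"

end

theory Submission
  imports Defs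
begin

text \<open>
  For an additive \<open>l : \<real> \<Rightarrow> \<real>\<close> vanishing on \<open>\<rat>\<close>, the weight derivation
  \<open>\<Sum> c\<^sub>\<mu> x\<^sup>\<mu> \<mapsto> \<Sum> l \<mu> c\<^sub>\<mu> x\<^sup>\<mu>\<close> is a derivation of \<open>\<Omega>\<close> that kills every Puiseux series.
  Applied to \<open>P(s, s', \<dots>, s^(n))\<close> it gives \<open>\<Sum>\<^sub>j (\<partial>P/\<partial>y\<^sub>j)(s, \<dots>) \<cdot> \<delta>(s^(j))\<close>, so by induction
  on the degree of \<open>P\<close> it suffices that for \<open>Q\<^sub>0, \<dots>, Q\<^sub>n \<in> \<Omega>\<close>, not all zero, some weight
  derivation has \<open>\<Sum>\<^sub>j Q\<^sub>j \<cdot> \<delta>(s^(j)) \<noteq> 0\<close>.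

  The dimension hypothesis provides \<open>n + 1\<close> exponents \<open>\<nu>\<close> of \<open>s\<close> outside the \<open>\<rat>\<close>-span of
  \<open>\<rat>\<close> and the smaller exponents of \<open>s\<close>; for each there is an \<open>l\<close> with \<open>l \<nu> = 1\<close> vanishing
  on that span. The \<open>j\<close>-th iterate multiplies \<open>x\<^sup>\<mu>\<close> by a polynomial of degree \<open>j\<close> in \<open>\<mu>\<close>
  (resp. \<open>q\<^sup>\<mu>\<close>), so if all these sums vanished, comparing the lowest possible coefficient would
  give a nonzero polynomial of degree at most \<open>n\<close> with \<open>n + 1\<close> distinct roots.
\<close>

section \<open>Derivations and polynomial evaluation\<close>

definition derivation :: "('a::comm_ring_1 \<Rightarrow> 'a) \<Rightarrow> bool" where
  "derivation \<delta> \<longleftrightarrow>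
     (\<forall>a b. \<delta> (a + b) = \<delta> a + \<delta> b) \<and> (\<forall>a b. \<delta> (a * b) = \<delta> a * b + a * \<delta> b)"

lemma derivation_add: "derivation \<delta> \<Longrightarrow> \<delta> (a + b) = \<delta> a + \<delta> b"
  unfolding derivation_def by blast

lemma derivation_mult: "derivation \<delta> \<Longrightarrow> \<delta> (a * b) = \<delta> a * b + a * \<delta> b"
  unfolding derivation_def by blast

lemma derivation_zero: "derivation \<delta> \<Longrightarrow> \<delta> 0 = 0"
  using derivation_add[of \<delta> 0 0] by simp

lemma derivation_sum: "derivation \<delta> \<Longrightarrow> \<delta> (\<Sum>x\<in>A. f x) = (\<Sum>x\<in>A. \<delta> (f x))"
  by (induction A rule: infinite_finite_induct) (auto simp: derivation_zero derivation_add)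

lemma derivation_one: "derivation \<delta> \<Longrightarrow> \<delta> 1 = 0"
  using derivation_mult[of \<delta> 1 1] by simp

lemma derivation_of_nat: "derivation \<delta> \<Longrightarrow> \<delta> (of_nat k) = 0"
  using derivation_sum[of \<delta> "\<lambda>_. 1" "{..<k}"] by (simp add: derivation_one)

lemma derivation_power:
  assumes "derivation \<delta>"
  shows "\<delta> (a ^ k) = of_nat k * a ^ (k - 1) * \<delta> a"
proof (induction k)
  case (Suc k)
  then show ?case
    by (cases k) (simp_all add: derivation_mult[OF assms] algebra_simps)
qed (simp add: derivation_one[OF assms])

lemma derivation_prod:
  assumes "derivation \<delta>" and "finite I"
  shows "\<delta> (\<Prod>i\<in>I. f i) = (\<Sum>k\<in>I. (\<Prod>i\<in>I - {k}. f i) * \<delta> (f k))"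
  using assms(2)
proof (induction I rule: finite_induct)
  case (insert x F)
  have "(\<Prod>i\<in>insert x F - {k}. f i) = f x * (\<Prod>i\<in>F - {k}. f i)" if "k \<in> F" for k
    using insert that by (auto simp: insert_Diff_if)
  with insert show ?case
    by (simp add: derivation_mult[OF assms(1)] sum_distrib_left mult_ac insert_Diff_if)
qed (simp add: derivation_one[OF assms(1)])

definition mpoly_eval :: "nat \<Rightarrow> ((nat \<Rightarrow> nat) \<Rightarrow> 'a) \<Rightarrow> (nat \<Rightarrow> 'a) \<Rightarrow> 'a::comm_ring_1" where
  "mpoly_eval m P Y = (\<Sum>\<alpha> | P \<alpha> \<noteq> 0. P \<alpha> * (\<Prod>i<m. Y i ^ \<alpha> i))"

definition mpoly_pderiv :: "nat \<Rightarrow> ((nat \<Rightarrow> nat) \<Rightarrow> 'a) \<Rightarrow> (nat \<Rightarrow> nat) \<Rightarrow> 'a::comm_ring_1" where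
  "mpoly_pderiv j P \<beta> = of_nat (Suc (\<beta> j)) * P (\<beta>(j := Suc (\<beta> j)))"

definition is_mpoly :: "nat \<Rightarrow> 'a set \<Rightarrow> ((nat \<Rightarrow> nat) \<Rightarrow> 'a::zero) \<Rightarrow> bool" where
  "is_mpoly m K P \<longleftrightarrow>
     finite {\<alpha>. P \<alpha> \<noteq> 0} \<and> (\<forall>\<alpha> i. P \<alpha> \<noteq> 0 \<longrightarrow> m \<le> i \<longrightarrow> \<alpha> i = 0) \<and> range P \<subseteq> K"

lemma mpoly_eval_eq_sum:
  assumes "finite S" "{\<alpha>. P \<alpha> \<noteq> 0} \<subseteq> S"
  shows "mpoly_eval m P Y = (\<Sum>\<alpha>\<in>S. P \<alpha> * (\<Prod>i<m. Y i ^ \<alpha> i))"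
  unfolding mpoly_eval_def by (rule sum.mono_neutral_left) (use assms in auto)

lemma sum_fun_upd_lessThan:
  fixes \<beta> :: "nat \<Rightarrow> 'a::comm_monoid_add"
  assumes "j < m"
  shows "(\<Sum>i<m. (\<beta>(j := x)) i) = x + (\<Sum>i\<in>{..<m} - {j}. \<beta> i)"
  using assms by (subst sum.remove[of _ j]) (auto intro: sum.cong)

lemma prod_power_fun_upd_lessThan:
  fixes Y :: "nat \<Rightarrow> 'a::comm_monoid_mult"
  assumes "j < m"
  shows "(\<Prod>i<m. Y i ^ (\<beta>(j := x)) i) = Y j ^ x * (\<Prod>i\<in>{..<m} - {j}. Y i ^ \<beta> i)"
  using assms by (subst prod.remove[of _ j]) (auto intro: prod.cong)

lemma inj_fun_upd_Suc: "inj (\<lambda>\<beta>::nat \<Rightarrow> nat. \<beta>(j := Suc (\<beta> j)))"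
proof (rule injI)
  fix \<beta> \<gamma> :: "nat \<Rightarrow> nat"
  assume eq: "\<beta>(j := Suc (\<beta> j)) = \<gamma>(j := Suc (\<gamma> j))"
  have "\<beta> i = \<gamma> i" for i
    using fun_cong[OF eq, of i] fun_cong[OF eq, of j] by (auto split: if_splits)
  then show "\<beta> = \<gamma>" ..
qed

lemma mpoly_eval_pderiv:
  assumes "finite {\<alpha>. P \<alpha> \<noteq> 0}" "j < m"
  shows "mpoly_eval m (mpoly_pderiv j P) Y =
    (\<Sum>\<alpha> | P \<alpha> \<noteq> 0. P \<alpha> * (of_nat (\<alpha> j) * Y j ^ (\<alpha> j - 1) * (\<Prod>i\<in>{..<m} - {j}. Y i ^ \<alpha> i)))"
    (is "_ = (\<Sum>\<alpha>\<in>?S. ?F \<alpha>)")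
proof -
  define h where "h \<beta> = \<beta>(j := Suc (\<beta> j))" for \<beta> :: "nat \<Rightarrow> nat"
  have "inj h"
    using inj_fun_upd_Suc unfolding h_def .
  have range_h: "range h = {\<alpha>. \<alpha> j \<noteq> 0}"
  proof (intro equalityI subsetI)
    fix \<alpha> :: "nat \<Rightarrow> nat" assume "\<alpha> \<in> {\<alpha>. \<alpha> j \<noteq> 0}"
    then have "\<alpha> = h (\<alpha>(j := \<alpha> j - 1))" by (auto simp: h_def)
    then show "\<alpha> \<in> range h" by blast
  qed (auto simp: h_def)
  have "mpoly_eval m (mpoly_pderiv j P) Y = (\<Sum>\<beta>\<in>h -` ?S. ?F (h \<beta>))"
  proof (subst mpoly_eval_eq_sum)
    show "finite (h -` ?S)" using finite_vimageI[OF assms(1) \<open>inj h\<close>] .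
    have "(\<Prod>i<m. Y i ^ \<beta> i) = Y j ^ \<beta> j * (\<Prod>i\<in>{..<m} - {j}. Y i ^ (h \<beta>) i)" for \<beta>
      using prod_power_fun_upd_lessThan[OF assms(2), of Y \<beta> "\<beta> j"] by (auto simp: h_def intro: prod.cong)
    then show "(\<Sum>\<beta>\<in>h -` ?S. mpoly_pderiv j P \<beta> * (\<Prod>i<m. Y i ^ \<beta> i)) = (\<Sum>\<beta>\<in>h -` ?S. ?F (h \<beta>))"
      by (intro sum.cong) (auto simp: mpoly_pderiv_def h_def)
  qed (auto simp: mpoly_pderiv_def h_def)
  also have "\<dots> = (\<Sum>\<alpha>\<in>h ` (h -` ?S). ?F \<alpha>)"
    using sum.reindex[of h "h -` ?S" ?F] \<open>inj h\<close> by (simp add: inj_on_def)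
  also have "\<dots> = (\<Sum>\<alpha>\<in>?S \<inter> {\<alpha>. \<alpha> j \<noteq> 0}. ?F \<alpha>)"
    by (simp only: image_vimage_eq range_h)
  also have "\<dots> = (\<Sum>\<alpha>\<in>?S. ?F \<alpha>)"
    by (rule sum.mono_neutral_left) (use assms(1) in \<open>auto intro!: gr0I\<close>)
  finally show ?thesis .
qed

lemma derivation_mpoly_eval:
  assumes "derivation \<delta>" "finite {\<alpha>. P \<alpha> \<noteq> 0}" "\<And>\<alpha>. \<delta> (P \<alpha>) = 0"
  shows "\<delta> (mpoly_eval m P Y) = (\<Sum>j<m. mpoly_eval m (mpoly_pderiv j P) Y * \<delta> (Y j))"
proof -
  have "\<delta> (mpoly_eval m P Y) = (\<Sum>\<alpha> | P \<alpha> \<noteq> 0. P \<alpha> *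
      (\<Sum>j<m. (of_nat (\<alpha> j) * Y j ^ (\<alpha> j - 1) * (\<Prod>i\<in>{..<m} - {j}. Y i ^ \<alpha> i)) * \<delta> (Y j)))"
    unfolding mpoly_eval_def derivation_sum[OF assms(1)]
    by (intro sum.cong) (simp_all add: derivation_mult derivation_prod derivation_power assms mult_ac)
  also have "\<dots> = (\<Sum>j<m. (\<Sum>\<alpha> | P \<alpha> \<noteq> 0. P \<alpha> *
      (of_nat (\<alpha> j) * Y j ^ (\<alpha> j - 1) * (\<Prod>i\<in>{..<m} - {j}. Y i ^ \<alpha> i))) * \<delta> (Y j))"
    by (simp add: sum_distrib_left sum_distrib_right sum.swap[of _ "{..<m}"] mult.assoc)
  finally show ?thesis
    by (simp add: mpoly_eval_pderiv[OF assms(2)])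
qed

lemma mpoly_eval_const:
  assumes "is_mpoly m K P" "\<And>\<beta> j. P \<beta> \<noteq> 0 \<Longrightarrow> j < m \<Longrightarrow> \<beta> j = 0" "P \<alpha> \<noteq> 0"
  shows "mpoly_eval m P Y = P \<alpha>"
proof -
  have vanish: "\<gamma> i = 0" if "P \<gamma> \<noteq> 0" for \<gamma> i
    using assms(1) assms(2)[OF that] that unfolding is_mpoly_def by (cases "i < m") auto
  have "\<beta> = \<alpha>" if "P \<beta> \<noteq> 0" for \<beta>
    using vanish[OF that] vanish[OF assms(3)] by auto
  then have "mpoly_eval m P Y = (\<Sum>\<beta>\<in>{\<alpha>}. P \<beta> * (\<Prod>i<m. Y i ^ \<beta> i))"
    by (intro mpoly_eval_eq_sum) auto
  also have "\<dots> = P \<alpha>"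
    using vanish[OF assms(3)] by simp
  finally show ?thesis .
qed

lemma mpoly_pderiv_degree:
  assumes "j < m" "\<forall>\<alpha>. P \<alpha> \<noteq> 0 \<longrightarrow> (\<Sum>i<m. \<alpha> i) \<le> d" "mpoly_pderiv j P \<beta> \<noteq> 0"
  shows "Suc (\<Sum>i<m. \<beta> i) \<le> d"
proof -
  have "P (\<beta>(j := Suc (\<beta> j))) \<noteq> 0"
    using assms(3) by (auto simp: mpoly_pderiv_def)
  then have "(\<Sum>i<m. (\<beta>(j := Suc (\<beta> j))) i) \<le> d"
    using assms(2) by blast
  moreover have "(\<Sum>i<m. \<beta> i) = \<beta> j + (\<Sum>i\<in>{..<m} - {j}. \<beta> i)"
    using sum_fun_upd_lessThan[OF assms(1), of \<beta> "\<beta> j"] by simp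
  ultimately show ?thesis
    using sum_fun_upd_lessThan[OF assms(1), of \<beta> "Suc (\<beta> j)"] by simp
qed

lemma is_mpoly_pderiv:
  assumes "is_mpoly m K P" "j < m" "\<And>k c. c \<in> K \<Longrightarrow> of_nat k * c \<in> K"
  shows "is_mpoly m K (mpoly_pderiv j P)"
proof -
  let ?h = "\<lambda>\<beta>. \<beta>(j := Suc (\<beta> j))"
  have "finite (?h -` {\<alpha>. P \<alpha> \<noteq> 0})"
    using assms(1) finite_vimageI[OF _ inj_fun_upd_Suc] unfolding is_mpoly_def by blast
  then have "finite {\<beta>. mpoly_pderiv j P \<beta> \<noteq> 0}"
    by (rule rev_finite_subset) (auto simp: mpoly_pderiv_def)
  moreover have "\<beta> i = 0" if "mpoly_pderiv j P \<beta> \<noteq> 0" "m \<le> i" for \<beta> i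
  proof -
    have "P (\<beta>(j := Suc (\<beta> j))) \<noteq> 0"
      using that(1) by (auto simp: mpoly_pderiv_def)
    then have "(\<beta>(j := Suc (\<beta> j))) i = 0"
      using assms(1) that(2) unfolding is_mpoly_def by blast
    with assms(2) that(2) show ?thesis
      by (auto split: if_splits)
  qed
  moreover have "mpoly_pderiv j P \<beta> \<in> K" for \<beta>
    using assms(1,3) unfolding is_mpoly_def mpoly_pderiv_def by blast
  ultimately show ?thesis
    unfolding is_mpoly_def by blast
qed

lemma mpoly_pderiv_nonzero:
  fixes P :: "(nat \<Rightarrow> nat) \<Rightarrow> 'a::comm_ring_1"
  assumes "P \<alpha> \<noteq> 0" "\<alpha> j \<noteq> 0" "\<And>k (a::'a). of_nat (Suc k) * a = 0 \<Longrightarrow> a = 0"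
  shows "mpoly_pderiv j P (\<alpha>(j := \<alpha> j - 1)) \<noteq> 0"
  using assms(1,2) assms(3)[of "\<alpha> j - 1" "P \<alpha>"] by (auto simp: mpoly_pderiv_def simp del: of_nat_Suc)

theorem mpoly_eval_neq_0_if_separating:
  fixes Y :: "nat \<Rightarrow> 'a::comm_ring_1" and \<Delta> :: "('a \<Rightarrow> 'a) set"
  assumes torsion_free: "\<And>k (a::'a). of_nat (Suc k) * a = 0 \<Longrightarrow> a = 0"
    and derivations: "\<And>\<delta>. \<delta> \<in> \<Delta> \<Longrightarrow> derivation \<delta>"
    and separating: "\<And>Q. \<exists>k<m. Q k \<noteq> 0 \<Longrightarrow> \<exists>\<delta>\<in>\<Delta>. (\<Sum>j<m. Q j * \<delta> (Y j)) \<noteq> 0"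
    and P: "is_mpoly m {c. \<forall>\<delta>\<in>\<Delta>. \<delta> c = 0} P" and "P \<alpha>\<^sub>0 \<noteq> 0"
  shows "mpoly_eval m P Y \<noteq> 0"
proof -
  let ?K = "{c. \<forall>\<delta>\<in>\<Delta>. \<delta> c = 0}"
  have K_closed: "of_nat k * c \<in> ?K" if "c \<in> ?K" for k c
    using that derivations by (auto simp: derivation_mult derivation_of_nat)
  define d where "d = (\<Sum>\<alpha> | P \<alpha> \<noteq> 0. \<Sum>i<m. \<alpha> i)"
  have "\<forall>\<alpha>. P \<alpha> \<noteq> 0 \<longrightarrow> (\<Sum>i<m. \<alpha> i) \<le> d"
    using P unfolding is_mpoly_def d_def by (auto intro: member_le_sum)
  then show ?thesis
    using P \<open>P \<alpha>\<^sub>0 \<noteq> 0\<close>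
  proof (induction d arbitrary: P \<alpha>\<^sub>0 rule: less_induct)
    case (less d)
    show ?case
    proof (cases "\<exists>\<alpha> j. P \<alpha> \<noteq> 0 \<and> j < m \<and> \<alpha> j \<noteq> 0")
      case False
      have "mpoly_eval m P Y = P \<alpha>\<^sub>0"
      proof (rule mpoly_eval_const[OF less.prems(2) _ less.prems(3)])
        show "\<beta> j = 0" if "P \<beta> \<noteq> 0" "j < m" for \<beta> j
          using False that by blast
      qed
      with less.prems(3) show ?thesis
        by simp
    next
      case True
      then obtain \<alpha> j where \<alpha>: "P \<alpha> \<noteq> 0" "j < m" "\<alpha> j \<noteq> 0" by blast
      define Q where "Q k = mpoly_eval m (mpoly_pderiv k P) Y" for k
      have "Q k \<noteq> 0" if "k < m" "mpoly_pderiv k P \<beta> \<noteq> 0" for k \<beta>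
      proof -
        note deg = mpoly_pderiv_degree[OF \<open>k < m\<close> less.prems(1)]
        have "d - 1 < d"
          using deg[OF that(2)] by linarith
        moreover have "\<forall>\<gamma>. mpoly_pderiv k P \<gamma> \<noteq> 0 \<longrightarrow> (\<Sum>i<m. \<gamma> i) \<le> d - 1"
          using deg by fastforce
        ultimately show ?thesis
          unfolding Q_def using less.IH that(2) is_mpoly_pderiv[OF less.prems(2) \<open>k < m\<close> K_closed]
          by blast
      qed
      moreover have "mpoly_pderiv j P (\<alpha>(j := \<alpha> j - 1)) \<noteq> 0"
        using \<alpha>(1,3) torsion_free by (rule mpoly_pderiv_nonzero)
      ultimately obtain \<delta> where "\<delta> \<in> \<Delta>" "(\<Sum>j<m. Q j * \<delta> (Y j)) \<noteq> 0"
        using separating \<open>j < m\<close> by blast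
      moreover have "\<delta> (mpoly_eval m P Y) = (\<Sum>j<m. Q j * \<delta> (Y j))"
        unfolding Q_def using less.prems(2) \<open>\<delta> \<in> \<Delta>\<close>
        by (intro derivation_mpoly_eval derivations) (auto simp: is_mpoly_def)
      ultimately show ?thesis
        using derivation_zero derivations by fastforce
    qed
  qed
qed

section \<open>The ring of generalized power series\<close>

lemma Omega_finite_below: "s \<in> Omega \<Longrightarrow> finite {\<mu>. s \<mu> \<noteq> 0 \<and> \<mu> \<le> M}"
  unfolding Omega_def by blast

lemma Omega_has_least_exponent:
  assumes "s \<in> Omega" "s \<mu>\<^sub>1 \<noteq> 0"
  obtains \<mu>\<^sub>0 where "s \<mu>\<^sub>0 \<noteq> 0" "\<And>\<mu>. s \<mu> \<noteq> 0 \<Longrightarrow> \<mu>\<^sub>0 \<le> \<mu>"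
proof -
  let ?F = "{\<mu>. s \<mu> \<noteq> 0 \<and> \<mu> \<le> \<mu>\<^sub>1}"
  have F: "finite ?F" "\<mu>\<^sub>1 \<in> ?F"
    using assms Omega_finite_below by auto
  show ?thesis
  proof (rule that)
    show "s (Min ?F) \<noteq> 0"
      using Min_in[OF F(1)] F(2) by blast
    show "Min ?F \<le> \<mu>" if "s \<mu> \<noteq> 0" for \<mu>
      using Min_le[OF F(1), of \<mu>] Min_le[OF F(1,2)] that by (cases "\<mu> \<le> \<mu>\<^sub>1") auto
  qed
qed

lemma Omega_bounded_below:
  assumes "s \<in> Omega"
  obtains L where "\<And>\<mu>. s \<mu> \<noteq> 0 \<Longrightarrow> L \<le> \<mu>"
proof (cases "\<exists>\<mu>. s \<mu> \<noteq> 0")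
  case True
  then show ?thesis
    using Omega_has_least_exponent[OF assms] that by blast
qed (use that in blast)

lemma Omega_zero: "gs_zero \<in> Omega"
  by (simp add: Omega_def gs_zero_def)

lemma Omega_one: "gs_one \<in> Omega"
proof -
  have "{\<mu>. gs_one \<mu> \<noteq> 0 \<and> \<mu> \<le> M} \<subseteq> {0}" for M
    by (auto simp: gs_one_def)
  then show ?thesis
    unfolding Omega_def by (auto intro: rev_finite_subset)
qed

lemma Omega_support_subset:
  assumes "a \<in> Omega" "\<And>\<mu>. b \<mu> \<noteq> 0 \<Longrightarrow> a \<mu> \<noteq> 0"
  shows "b \<in> Omega"
proof -
  have "{\<mu>. b \<mu> \<noteq> 0 \<and> \<mu> \<le> M} \<subseteq> {\<mu>. a \<mu> \<noteq> 0 \<and> \<mu> \<le> M}" for M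
    using assms(2) by blast
  then show ?thesis
    unfolding Omega_def using Omega_finite_below[OF assms(1)] by (blast intro: finite_subset)
qed

lemma Omega_scale: "a \<in> Omega \<Longrightarrow> (\<lambda>\<mu>. f \<mu> * a \<mu>) \<in> Omega"
  by (erule Omega_support_subset) auto

lemma Omega_shift:
  assumes "s \<in> Omega"
  shows "(\<lambda>\<mu>. f \<mu> * s (\<mu> + c)) \<in> Omega"
proof -
  have "{\<mu>. f \<mu> * s (\<mu> + c) \<noteq> 0 \<and> \<mu> \<le> M} \<subseteq> (\<lambda>x. x - c) ` {x. s x \<noteq> 0 \<and> x \<le> M + c}" for M
    by (auto intro!: image_eqI[where x = "_ + c"])
  then have "finite {\<mu>. f \<mu> * s (\<mu> + c) \<noteq> 0 \<and> \<mu> \<le> M}" for M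
    using Omega_finite_below[OF assms, of "M + c"] by (meson finite_imageI finite_subset)
  then show ?thesis
    by (simp add: Omega_def)
qed

lemma Omega_add:
  assumes "a \<in> Omega" "b \<in> Omega"
  shows "(\<lambda>\<mu>. a \<mu> + b \<mu>) \<in> Omega"
proof -
  have "{\<mu>. a \<mu> + b \<mu> \<noteq> 0 \<and> \<mu> \<le> M} \<subseteq> {\<mu>. a \<mu> \<noteq> 0 \<and> \<mu> \<le> M} \<union> {\<mu>. b \<mu> \<noteq> 0 \<and> \<mu> \<le> M}" for M
    by auto
  then have "finite {\<mu>. a \<mu> + b \<mu> \<noteq> 0 \<and> \<mu> \<le> M}" for M
    using Omega_finite_below[OF assms(1)] Omega_finite_below[OF assms(2)] by (meson finite_UnI finite_subset)
  then show ?thesis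
    unfolding Omega_def by simp
qed

lemma gs_mult_eq_sum:
  assumes "finite T" "{\<nu>. a \<nu> \<noteq> 0 \<and> b (\<mu> - \<nu>) \<noteq> 0} \<subseteq> T"
  shows "gs_mult a b \<mu> = (\<Sum>\<nu>\<in>T. a \<nu> * b (\<mu> - \<nu>))"
  unfolding gs_mult_def by (rule sum.mono_neutral_left) (use assms in auto)

lemma gs_mult_nonzeroE:
  assumes "gs_mult a b \<mu> \<noteq> 0"
  obtains \<nu> where "a \<nu> \<noteq> 0" "b (\<mu> - \<nu>) \<noteq> 0"
proof -
  have "{\<nu>. a \<nu> \<noteq> 0 \<and> b (\<mu> - \<nu>) \<noteq> 0} \<noteq> {}"
    using assms unfolding gs_mult_def by force
  then show ?thesis
    using that by blast
qed

lemma gs_mult_bounded_below: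
  assumes "\<And>\<mu>. a \<mu> \<noteq> 0 \<Longrightarrow> La \<le> \<mu>" "\<And>\<mu>. b \<mu> \<noteq> 0 \<Longrightarrow> Lb \<le> \<mu>" "gs_mult a b \<mu> \<noteq> 0"
  shows "La + Lb \<le> \<mu>"
proof -
  obtain \<nu> where "a \<nu> \<noteq> 0" "b (\<mu> - \<nu>) \<noteq> 0"
    using gs_mult_nonzeroE[OF assms(3)] .
  with assms(1,2) show ?thesis
    by fastforce
qed

lemma gs_mult_support_finite:
  assumes "a \<in> Omega" "b \<in> Omega"
  shows "finite {\<nu>. a \<nu> \<noteq> 0 \<and> b (\<mu> - \<nu>) \<noteq> 0}"
proof -
  obtain L where L: "\<And>\<mu>. b \<mu> \<noteq> 0 \<Longrightarrow> L \<le> \<mu>"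
    using Omega_bounded_below assms(2) by metis
  have "{\<nu>. a \<nu> \<noteq> 0 \<and> b (\<mu> - \<nu>) \<noteq> 0} \<subseteq> {\<nu>. a \<nu> \<noteq> 0 \<and> \<nu> \<le> \<mu> - L}"
  proof (rule subsetI)
    fix \<nu> assume "\<nu> \<in> {\<nu>. a \<nu> \<noteq> 0 \<and> b (\<mu> - \<nu>) \<noteq> 0}"
    then show "\<nu> \<in> {\<nu>. a \<nu> \<noteq> 0 \<and> \<nu> \<le> \<mu> - L}"
      using L[of "\<mu> - \<nu>"] by simp
  qed
  then show ?thesis
    using Omega_finite_below[OF assms(1)] by (rule finite_subset)
qed

lemma gs_mult_Omega:
  assumes a: "a \<in> Omega" and b: "b \<in> Omega"
  shows "gs_mult a b \<in> Omega"
  unfolding Omega_def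
proof (intro CollectI allI)
  fix M
  obtain La Lb where La: "\<And>\<mu>. a \<mu> \<noteq> 0 \<Longrightarrow> La \<le> \<mu>" and Lb: "\<And>\<mu>. b \<mu> \<noteq> 0 \<Longrightarrow> Lb \<le> \<mu>"
    using Omega_bounded_below a b by metis
  let ?A = "{x. a x \<noteq> 0 \<and> x \<le> M - Lb}" and ?B = "{y. b y \<noteq> 0 \<and> y \<le> M - La}"
  have "{\<mu>. gs_mult a b \<mu> \<noteq> 0 \<and> \<mu> \<le> M} \<subseteq> (\<lambda>(x, y). x + y) ` (?A \<times> ?B)"
  proof clarify
    fix \<mu> assume "gs_mult a b \<mu> \<noteq> 0" "\<mu> \<le> M"
    then obtain \<nu> where "a \<nu> \<noteq> 0" "b (\<mu> - \<nu>) \<noteq> 0"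
      using gs_mult_nonzeroE by blast
    with La[of \<nu>] Lb[of "\<mu> - \<nu>"] \<open>\<mu> \<le> M\<close> have "(\<nu>, \<mu> - \<nu>) \<in> ?A \<times> ?B"
      by auto
    then show "\<mu> \<in> (\<lambda>(x, y). x + y) ` (?A \<times> ?B)"
      by (rule rev_image_eqI) simp
  qed
  then show "finite {\<mu>. gs_mult a b \<mu> \<noteq> 0 \<and> \<mu> \<le> M}"
    by (rule finite_subset) (use Omega_finite_below[OF a] Omega_finite_below[OF b] in auto)
qed

lemma gs_mult_commute: "gs_mult a b = gs_mult b a"
  unfolding gs_mult_def
  by (rule ext, rule sum.reindex_bij_witness[of _ "\<lambda>\<nu>. _ - \<nu>" "\<lambda>\<nu>. _ - \<nu>"]) auto

lemma gs_mult_one: "gs_mult gs_one a = a"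
proof
  fix \<mu>
  have "gs_mult gs_one a \<mu> = (\<Sum>\<nu>\<in>{0}. gs_one \<nu> * a (\<mu> - \<nu>))"
    by (rule gs_mult_eq_sum) (auto simp: gs_one_def split: if_splits)
  then show "gs_mult gs_one a \<mu> = a \<mu>"
    by (simp add: gs_one_def)
qed

lemma gs_mult_distrib:
  assumes a: "a \<in> Omega" and b: "b \<in> Omega" and c: "c \<in> Omega"
  shows "gs_mult (\<lambda>\<mu>. b \<mu> + c \<mu>) a \<mu> = gs_mult b a \<mu> + gs_mult c a \<mu>"
proof -
  obtain La where La: "\<And>\<mu>. a \<mu> \<noteq> 0 \<Longrightarrow> La \<le> \<mu>"
    using Omega_bounded_below a by metis
  define T where "T = {\<nu>. b \<nu> \<noteq> 0 \<and> \<nu> \<le> \<mu> - La} \<union> {\<nu>. c \<nu> \<noteq> 0 \<and> \<nu> \<le> \<mu> - La}"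
  have T: "finite T"
    unfolding T_def using Omega_finite_below b c by blast
  have eq: "gs_mult f a \<mu> = (\<Sum>\<nu>\<in>T. f \<nu> * a (\<mu> - \<nu>))"
    if "\<And>\<nu>. f \<nu> \<noteq> 0 \<Longrightarrow> b \<nu> \<noteq> 0 \<or> c \<nu> \<noteq> 0" for f
    by (rule gs_mult_eq_sum[OF T]) (force simp: T_def dest: that La)
  have "gs_mult (\<lambda>\<mu>. b \<mu> + c \<mu>) a \<mu> = (\<Sum>\<nu>\<in>T. (b \<nu> + c \<nu>) * a (\<mu> - \<nu>))"
    by (rule eq) auto
  then show ?thesis
    using eq[of b] eq[of c] by (simp add: sum.distrib distrib_right)
qed

lemma gs_mult_triple_sum:
  assumes a: "a \<in> Omega" and b: "b \<in> Omega" and c: "c \<in> Omega"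
    and L: "\<forall>\<mu>. a \<mu> \<noteq> 0 \<or> b \<mu> \<noteq> 0 \<or> c \<mu> \<noteq> 0 \<longrightarrow> L \<le> \<mu>"
  shows "gs_mult a (gs_mult b c) \<mu> =
    (\<Sum>x | a x \<noteq> 0 \<and> x \<le> \<mu> - 2 * L. \<Sum>y | b y \<noteq> 0 \<and> y \<le> \<mu> - 2 * L.
       \<Sum>z | c z \<noteq> 0 \<and> z \<le> \<mu> - 2 * L. if x + y + z = \<mu> then a x * b y * c z else 0)"
proof -
  let ?A = "{x. a x \<noteq> 0 \<and> x \<le> \<mu> - 2 * L}" and ?B = "{y. b y \<noteq> 0 \<and> y \<le> \<mu> - 2 * L}"
    and ?C = "{z. c z \<noteq> 0 \<and> z \<le> \<mu> - 2 * L}"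
  have fin: "finite ?A" "finite ?B" "finite ?C"
    using a b c by (simp_all add: Omega_finite_below)
  have "c (\<mu> - x - y) = (\<Sum>z\<in>?C. if x + y + z = \<mu> then c z else 0)" if "x \<in> ?A" "y \<in> ?B" for x y
  proof -
    have "L \<le> x" "L \<le> y"
      using that L by auto
    then have "\<mu> - x - y \<le> \<mu> - 2 * L"
      by simp
    moreover have "(\<Sum>z\<in>?C. if x + y + z = \<mu> then c z else 0) = (\<Sum>z\<in>?C. if z = \<mu> - x - y then c z else 0)"
      by (intro sum.cong) auto
    ultimately show ?thesis
      using fin(3) by (simp add: sum.delta)
  qed
  moreover have "gs_mult b c (\<mu> - x) = (\<Sum>y\<in>?B. b y * c (\<mu> - x - y))" if "x \<in> ?A" for x
  proof (rule gs_mult_eq_sum[OF fin(2)], rule subsetI)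
    fix y assume "y \<in> {y. b y \<noteq> 0 \<and> c (\<mu> - x - y) \<noteq> 0}"
    moreover have "L \<le> x" "L \<le> \<mu> - x - y"
      using that L calculation by auto
    ultimately show "y \<in> ?B"
      by simp
  qed
  moreover have "gs_mult a (gs_mult b c) \<mu> = (\<Sum>x\<in>?A. a x * gs_mult b c (\<mu> - x))"
  proof (rule gs_mult_eq_sum[OF fin(1)], rule subsetI)
    fix x assume "x \<in> {x. a x \<noteq> 0 \<and> gs_mult b c (\<mu> - x) \<noteq> 0}"
    moreover have "L + L \<le> \<mu> - x" if "gs_mult b c (\<mu> - x) \<noteq> 0"
      using gs_mult_bounded_below[of b L c L "\<mu> - x"] L that by blast
    ultimately show "x \<in> ?A"
      by force
  qed
  ultimately show ?thesis
    by (auto simp: sum_distrib_left if_distrib mult.assoc intro!: sum.cong)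
qed

lemma gs_mult_assoc:
  assumes a: "a \<in> Omega" and b: "b \<in> Omega" and c: "c \<in> Omega"
  shows "gs_mult (gs_mult a b) c = gs_mult a (gs_mult b c)"
proof
  fix \<mu>
  obtain La Lb Lc where La: "\<And>\<mu>. a \<mu> \<noteq> 0 \<Longrightarrow> La \<le> \<mu>" and Lb: "\<And>\<mu>. b \<mu> \<noteq> 0 \<Longrightarrow> Lb \<le> \<mu>"
    and Lc: "\<And>\<mu>. c \<mu> \<noteq> 0 \<Longrightarrow> Lc \<le> \<mu>"
    using Omega_bounded_below a b c by metis
  define L where "L = min La (min Lb Lc)"
  have L: "\<forall>\<mu>. a \<mu> \<noteq> 0 \<or> b \<mu> \<noteq> 0 \<or> c \<mu> \<noteq> 0 \<longrightarrow> L \<le> \<mu>"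
  proof (intro allI impI)
    fix \<mu> assume "a \<mu> \<noteq> 0 \<or> b \<mu> \<noteq> 0 \<or> c \<mu> \<noteq> 0"
    then show "L \<le> \<mu>"
      unfolding L_def by (elim disjE) (simp_all add: min_le_iff_disj La Lb Lc)
  qed
  then have L': "\<forall>\<mu>. c \<mu> \<noteq> 0 \<or> a \<mu> \<noteq> 0 \<or> b \<mu> \<noteq> 0 \<longrightarrow> L \<le> \<mu>"
    by blast
  let ?S = "\<lambda>f. {x. f x \<noteq> 0 \<and> x \<le> \<mu> - 2 * L}"
  have "gs_mult (gs_mult a b) c \<mu> = gs_mult c (gs_mult a b) \<mu>"
    by (simp add: gs_mult_commute)
  also have "\<dots> = (\<Sum>z\<in>?S c. \<Sum>x\<in>?S a. \<Sum>y\<in>?S b. if z + x + y = \<mu> then c z * a x * b y else 0)"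
    by (rule gs_mult_triple_sum[OF c a b L'])
  also have "\<dots> = (\<Sum>x\<in>?S a. \<Sum>z\<in>?S c. \<Sum>y\<in>?S b. if z + x + y = \<mu> then c z * a x * b y else 0)"
    by (rule sum.swap)
  also have "\<dots> = (\<Sum>x\<in>?S a. \<Sum>y\<in>?S b. \<Sum>z\<in>?S c. if z + x + y = \<mu> then c z * a x * b y else 0)"
    by (rule sum.cong[OF refl], rule sum.swap)
  also have "\<dots> = gs_mult a (gs_mult b c) \<mu>"
    unfolding gs_mult_triple_sum[OF a b c L] by (intro sum.cong refl) (simp add: ac_simps)
  finally show "gs_mult (gs_mult a b) c \<mu> = gs_mult a (gs_mult b c) \<mu>" .
qed

typedef omega = Omega
  using Omega_zero by blast

setup_lifting type_definition_omega

instantiation omega :: comm_ring_1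
begin

lift_definition zero_omega :: omega is gs_zero
  by (rule Omega_zero)

lift_definition one_omega :: omega is gs_one
  by (rule Omega_one)

lift_definition plus_omega :: "omega \<Rightarrow> omega \<Rightarrow> omega" is "\<lambda>a b \<mu>. a \<mu> + b \<mu>"
  by (rule Omega_add)

lift_definition uminus_omega :: "omega \<Rightarrow> omega" is "\<lambda>a \<mu>. - a \<mu>"
  by (erule Omega_support_subset) simp

lift_definition minus_omega :: "omega \<Rightarrow> omega \<Rightarrow> omega" is "\<lambda>a b \<mu>. a \<mu> - b \<mu>"
  unfolding diff_conv_add_uminus by (rule Omega_add, assumption, erule Omega_support_subset, simp)

lift_definition times_omega :: "omega \<Rightarrow> omega \<Rightarrow> omega" is gs_mult
  by (rule gs_mult_Omega)

instance
proof
  fix a b c :: omega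
  show "a * b * c = a * (b * c)"
    by transfer (rule gs_mult_assoc)
  show "a * b = b * a"
    by transfer (rule gs_mult_commute)
  show "1 * a = a"
    by transfer (rule gs_mult_one)
  show "(a + b) * c = a * c + b * c"
    by transfer (simp add: gs_mult_distrib fun_eq_iff)
  show "0 \<noteq> (1 :: omega)"
    by transfer (simp add: gs_zero_def gs_one_def fun_eq_iff)
  show "a + b + c = a + (b + c)"
    by transfer (simp add: add.assoc)
  show "a + b = b + a"
    by transfer (simp add: add.commute)
  show "0 + a = a"
    by transfer (simp add: gs_zero_def)
  show "- a + a = 0"
    by transfer (simp add: gs_zero_def)
  show "a - b = a + - b"
    by transfer simp
qed

end

lemma Rep_omega_sum: "Rep_omega (\<Sum>x\<in>A. f x) = (\<lambda>\<mu>. \<Sum>x\<in>A. Rep_omega (f x) \<mu>)"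
  by (induction A rule: infinite_finite_induct) (simp_all add: zero_omega.rep_eq plus_omega.rep_eq gs_zero_def)

lemma Rep_omega_eq_0_iff: "Rep_omega a = gs_zero \<longleftrightarrow> a = 0"
  by (metis Rep_omega_inject zero_omega.rep_eq)

lemma Rep_omega_of_nat_mult: "Rep_omega (of_nat k * a) = (\<lambda>\<mu>. of_nat k * Rep_omega a \<mu>)"
  by (induction k) (simp_all add: distrib_right plus_omega.rep_eq zero_omega.rep_eq gs_zero_def algebra_simps)

lemma omega_torsion_free: "of_nat (Suc k) * a = (0 :: omega) \<Longrightarrow> a = 0"
  by (simp only: Rep_omega_eq_0_iff[symmetric] Rep_omega_of_nat_mult) (simp add: gs_zero_def fun_eq_iff del: of_nat_Suc)

lemma gs_pow_Rep_omega: "gs_pow (Rep_omega a) k = Rep_omega (a ^ k)"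
  by (induction k) (simp_all add: gs_pow_def one_omega.rep_eq times_omega.rep_eq)

lemma Abs_omega_eq_0_iff: "a \<in> Omega \<Longrightarrow> Abs_omega a = 0 \<longleftrightarrow> a = gs_zero"
  by (metis Abs_omega_inverse Rep_omega_eq_0_iff mem_Collect_eq)

section \<open>Weight derivations\<close>

lift_definition weight_deriv :: "(real \<Rightarrow> real) \<Rightarrow> omega \<Rightarrow> omega"
  is "\<lambda>l a \<mu>. complex_of_real (l \<mu>) * a \<mu>"
  by (rule Omega_scale)

lemma gs_mult_weight_Leibniz:
  assumes ab: "a \<in> Omega" "b \<in> Omega" and l: "\<And>x y. l (x + y) = l x + l y"
  shows "complex_of_real (l \<mu>) * gs_mult a b \<mu> =
    gs_mult (\<lambda>\<mu>. complex_of_real (l \<mu>) * a \<mu>) b \<mu> + gs_mult a (\<lambda>\<mu>. complex_of_real (l \<mu>) * b \<mu>) \<mu>"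
proof -
  let ?T = "{\<nu>. a \<nu> \<noteq> 0 \<and> b (\<mu> - \<nu>) \<noteq> 0}"
  have T: "finite ?T"
    using gs_mult_support_finite[OF ab] .
  have "complex_of_real (l \<mu>) * gs_mult a b \<mu> =
      (\<Sum>\<nu>\<in>?T. complex_of_real (l \<nu>) * a \<nu> * b (\<mu> - \<nu>) + a \<nu> * (complex_of_real (l (\<mu> - \<nu>)) * b (\<mu> - \<nu>)))"
    unfolding gs_mult_def sum_distrib_left
  proof (rule sum.cong[OF refl])
    fix \<nu>
    have "complex_of_real (l \<mu>) = complex_of_real (l \<nu>) + complex_of_real (l (\<mu> - \<nu>))"
      using l[of \<nu> "\<mu> - \<nu>"] by simp
    then show "complex_of_real (l \<mu>) * (a \<nu> * b (\<mu> - \<nu>)) =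
        complex_of_real (l \<nu>) * a \<nu> * b (\<mu> - \<nu>) + a \<nu> * (complex_of_real (l (\<mu> - \<nu>)) * b (\<mu> - \<nu>))"
      by (simp add: algebra_simps)
  qed
  also have "\<dots> = gs_mult (\<lambda>\<mu>. complex_of_real (l \<mu>) * a \<mu>) b \<mu> + gs_mult a (\<lambda>\<mu>. complex_of_real (l \<mu>) * b \<mu>) \<mu>"
    by (subst (1 2) gs_mult_eq_sum[OF T]) (auto simp: sum.distrib mult.assoc)
  finally show ?thesis .
qed

lemma derivation_weight_deriv:
  assumes "\<And>x y. l (x + y) = l x + l y"
  shows "derivation (weight_deriv l)"
  unfolding derivation_def
proof (intro conjI allI)
  fix a b :: omega
  show "weight_deriv l (a + b) = weight_deriv l a + weight_deriv l b"
    by transfer (simp add: distrib_left)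
  show "weight_deriv l (a * b) = weight_deriv l a * b + a * weight_deriv l b"
    using gs_mult_weight_Leibniz[OF _ _ assms] by transfer (simp add: fun_eq_iff)
qed

lemma weight_deriv_eq_0:
  assumes "\<And>\<mu>. Rep_omega a \<mu> \<noteq> 0 \<Longrightarrow> l \<mu> = 0"
  shows "weight_deriv l a = 0"
  using assms by (auto simp: Rep_omega_eq_0_iff[symmetric] weight_deriv.rep_eq gs_zero_def fun_eq_iff)

definition weight_derivs_mod_Q :: "(omega \<Rightarrow> omega) set" where
  "weight_derivs_mod_Q =
     {weight_deriv l | l. (\<forall>x y. l (x + y) = l x + l y) \<and> (\<forall>r\<in>\<rat>. l r = 0)}"

lemma derivation_weight_derivs_mod_Q: "\<delta> \<in> weight_derivs_mod_Q \<Longrightarrow> derivation \<delta>"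
  unfolding weight_derivs_mod_Q_def by (auto intro: derivation_weight_deriv)

lemma Puiseux_subset_Omega: "Puiseux \<subseteq> Omega"
  unfolding Puiseux_def by blast

lemma weight_derivs_mod_Q_Puiseux:
  assumes "a \<in> Puiseux" "\<delta> \<in> weight_derivs_mod_Q"
  shows "\<delta> (Abs_omega a) = 0"
proof -
  obtain l where "\<delta> = weight_deriv l" "\<And>r. r \<in> \<rat> \<Longrightarrow> l r = 0"
    using assms(2) unfolding weight_derivs_mod_Q_def by blast
  moreover have "\<mu> \<in> \<rat>" if "a \<mu> \<noteq> 0" for \<mu>
    using assms(1) that unfolding Puiseux_def gsupp_def by force
  moreover have "Rep_omega (Abs_omega a) = a"
    using assms(1) Puiseux_subset_Omega by (blast intro: Abs_omega_inverse)
  ultimately show ?thesis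
    by (metis weight_deriv_eq_0)
qed

section \<open>Exponents modulo the rationals\<close>

definition qscale :: "rat \<Rightarrow> real \<Rightarrow> real" where
  "qscale r x = real_of_rat r * x"

interpretation Q: vector_space qscale
  by unfold_locales (simp_all add: qscale_def algebra_simps of_rat_add of_rat_mult)

interpretation QQ: vector_space_pair qscale qscale ..

lemma rat_span_eq_span: "rat_span E = Q.span E"
  unfolding rat_span_def Q.span_explicit qscale_def by blast

lemma Rats_subset_span_one: "\<rat> \<subseteq> Q.span {1}"
proof
  fix x :: real assume "x \<in> \<rat>"
  then obtain r where "x = qscale r 1"
    by (auto simp: qscale_def elim: Rats_cases)
  then show "x \<in> Q.span {1}"
    by (simp add: Q.span_base Q.span_scale)
qed

lemma exists_additive_functional:
  assumes "\<nu> \<notin> Q.span U"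
  obtains l :: "real \<Rightarrow> real"
  where "\<And>x y. l (x + y) = l x + l y" "\<And>u. u \<in> U \<Longrightarrow> l u = 0" "l \<nu> = 1"
proof -
  obtain B where B: "B \<subseteq> U" "Q.independent B" "U \<subseteq> Q.span B"
    using Q.maximal_independent_subset by blast
  have "Q.span B \<subseteq> Q.span U"
    using B(1) Q.span_mono by blast
  then have "\<nu> \<notin> Q.span B"
    using assms by blast
  then have "Q.independent (insert \<nu> B)" and "\<nu> \<notin> B"
    using B(2) Q.independent_insertI Q.span_base by blast+
  then obtain g where g: "Vector_Spaces.linear qscale qscale g"
    "\<forall>x\<in>insert \<nu> B. g x = (if x = \<nu> then 1 else 0)"
    using QQ.linear_independent_extend[of "insert \<nu> B" "\<lambda>x. if x = \<nu> then 1 else 0"] by blast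
  show ?thesis
  proof (rule that)
    show "g (x + y) = g x + g y" for x y
      using QQ.linear_add[OF g(1)] .
    show "g u = 0" if "u \<in> U" for u
    proof (rule QQ.linear_eq_0_on_span[OF g(1)])
      show "u \<in> Q.span B"
        using B(3) that by blast
      show "g b = 0" if "b \<in> B" for b
        using g(2) that \<open>\<nu> \<notin> B\<close> by auto
    qed
    show "g \<nu> = 1"
      using g(2) by simp
  qed
qed

lemma indep_mod_Q_not_Rats:
  assumes "indep_mod_Q m v" "i < m"
  shows "v i \<notin> \<rat>"
proof
  define r where "r j = (if j = i then 1 else (0::rat))" for j
  have "(\<Sum>j<m. real_of_rat (r j) * v j) = (\<Sum>j<m. if j = i then v j else 0)"
    by (intro sum.cong) (auto simp: r_def)
  then have "(\<Sum>j<m. real_of_rat (r j) * v j) = v i"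
    using assms(2) by simp
  moreover assume "v i \<in> \<rat>"
  ultimately have "r i = 0"
    using assms unfolding indep_mod_Q_def by simp
  then show False
    by (simp add: r_def)
qed

lemma indep_mod_Q_inj:
  assumes "indep_mod_Q m v"
  shows "inj_on v {..<m}"
proof (rule inj_onI, rule ccontr)
  fix i j assume ij: "i \<in> {..<m}" "j \<in> {..<m}" "v i = v j" "i \<noteq> j"
  define r where "r k = (if k = i then 1 else if k = j then -1 else (0::rat))" for k
  have "(\<Sum>k<m. real_of_rat (r k) * v k) = (\<Sum>k<m. (if k = i then v k else 0) - (if k = j then v k else 0))"
    by (intro sum.cong) (auto simp: r_def \<open>i \<noteq> j\<close>)
  also have "\<dots> = 0"
    using ij by (simp add: sum_subtractf)
  finally have "r i = 0"
    using assms ij(1) unfolding indep_mod_Q_def by simp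
  then show False
    by (simp add: r_def)
qed

lemma indep_mod_Q_independent:
  assumes "indep_mod_Q m v"
  shows "Q.independent (insert 1 (v ` {..<m}))"
proof
  let ?V = "insert 1 (v ` {..<m})"
  assume "Q.dependent ?V"
  then obtain u where u: "\<exists>x\<in>?V. u x \<noteq> 0" "(\<Sum>x\<in>?V. qscale (u x) x) = 0"
    using Q.dependent_finite[of ?V] by auto
  have "1 \<notin> v ` {..<m}"
    using indep_mod_Q_not_Rats[OF assms] by fastforce
  then have sum_eq: "(\<Sum>i<m. real_of_rat (u (v i)) * v i) = - real_of_rat (u 1)"
    using u(2) indep_mod_Q_inj[OF assms] by (simp add: sum.reindex qscale_def eq_neg_iff_add_eq_0)
  then have "(\<Sum>i<m. real_of_rat (u (v i)) * v i) \<in> \<rat>"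
    by simp
  then have "\<forall>i<m. u (v i) = 0"
    using assms unfolding indep_mod_Q_def by (elim allE[where x = "\<lambda>i. u (v i)"]) simp
  moreover from this have "u 1 = 0"
    using sum_eq by simp
  ultimately show False
    using u(1) by blast
qed

definition new_exponents :: "gser \<Rightarrow> real set" where
  "new_exponents s = {\<nu> \<in> gsupp s. \<nu> \<notin> Q.span (\<rat> \<union> {\<nu>' \<in> gsupp s. \<nu>' < \<nu>})}"

lemma gsupp_subset_span_new_exponents:
  assumes s: "s \<in> Omega"
  shows "gsupp s \<subseteq> Q.span (insert 1 (new_exponents s))"
proof
  let ?below = "\<lambda>\<nu>. {\<nu>' \<in> gsupp s. \<nu>' < \<nu>}"
  have below_finite: "finite (?below \<nu>)" for \<nu>
    by (rule finite_subset[OF _ Omega_finite_below[OF s, of \<nu>]]) (auto simp: gsupp_def)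
  fix \<nu> assume "\<nu> \<in> gsupp s"
  then show "\<nu> \<in> Q.span (insert 1 (new_exponents s))"
  proof (induction "card (?below \<nu>)" arbitrary: \<nu> rule: less_induct)
    case less
    show ?case
    proof (cases "\<nu> \<in> new_exponents s")
      case False
      have "\<rat> \<union> ?below \<nu> \<subseteq> Q.span (insert 1 (new_exponents s))"
      proof (intro Un_least subsetI)
        fix x assume x: "x \<in> ?below \<nu>"
        then have "?below x \<subset> ?below \<nu>"
          by auto
        then have "card (?below x) < card (?below \<nu>)"
          by (rule psubset_card_mono[OF below_finite])
        with x show "x \<in> Q.span (insert 1 (new_exponents s))"
          using less.hyps by blast
      qed (use Rats_subset_span_one Q.span_mono[of "{1}"] in blast)
      then have "Q.span (\<rat> \<union> ?below \<nu>) \<subseteq> Q.span (insert 1 (new_exponents s))"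
        by (simp add: Q.span_minimal)
      with False less.prems show ?thesis
        unfolding new_exponents_def by blast
    qed (simp add: Q.span_base)
  qed
qed

lemma new_exponents_card:
  assumes s: "s \<in> Omega" and dim: "dim_mod_Q_gt (gsupp s) n"
  obtains N where "N \<subseteq> new_exponents s" "finite N" "card N = Suc n"
proof -
  obtain v where v: "\<forall>i<Suc n. v i \<in> rat_span (gsupp s \<union> \<rat>)" "indep_mod_Q (Suc n) v"
    using dim unfolding dim_mod_Q_gt_def by blast
  let ?V = "insert 1 (v ` {..<Suc n})" and ?W = "insert 1 (new_exponents s)"
  have "gsupp s \<union> \<rat> \<subseteq> Q.span ?W"
    using gsupp_subset_span_new_exponents[OF s] Rats_subset_span_one Q.span_mono[of "{1}" ?W] by blast
  then have "Q.span (gsupp s \<union> \<rat>) \<subseteq> Q.span ?W"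
    by (simp add: Q.span_minimal)
  then have V: "?V \<subseteq> Q.span ?W"
    using v(1) Q.span_base[of 1 ?W] unfolding rat_span_eq_span by blast
  have "1 \<notin> v ` {..<Suc n}"
    using indep_mod_Q_not_Rats[OF v(2)] by fastforce
  then have "card ?V = Suc (Suc n)"
    using indep_mod_Q_inj[OF v(2)] by (simp add: card_image)
  show ?thesis
  proof (cases "finite (new_exponents s)")
    case True
    then have "card ?V \<le> card ?W"
      using Q.independent_span_bound[OF _ indep_mod_Q_independent[OF v(2)] V] by simp
    then have "Suc n \<le> card (new_exponents s)"
      using \<open>card ?V = Suc (Suc n)\<close> True by (simp add: card_insert_if split: if_splits)
    then show ?thesis
      using that by (meson obtain_subset_with_card_n finite_subset True)
  qed (use that infinite_arbitrarily_large in blast)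
qed

lemma sum_smult_triangular_eq_0D:
  fixes b :: "nat \<Rightarrow> 'a::idom poly"
  assumes "\<And>j. degree (b j) = j" "\<And>j. b j \<noteq> 0"
    and "(\<Sum>j<m. smult (a j) (b j)) = 0" "j < m"
  shows "a j = 0"
  using assms(3,4)
proof (induction m)
  case (Suc m)
  have "coeff (b i) m = 0" if "i < m" for i
    using assms(1)[of i] that by (simp add: coeff_eq_0)
  then have "a m * lead_coeff (b m) = coeff (\<Sum>i<Suc m. smult (a i) (b i)) m"
    unfolding coeff_sum by (simp add: assms(1))
  also have "\<dots> = 0"
    by (simp only: Suc.prems(1) coeff_0)
  finally have "a m = 0"
    using assms(2) by simp
  with Suc show ?case
    by (auto simp: less_Suc_eq)
qed simp

lemma sum_poly_vanishing_eq_0: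
  fixes b :: "nat \<Rightarrow> 'a::idom poly"
  assumes "\<And>j. degree (b j) = j" "\<And>j. b j \<noteq> 0"
    and "finite Z" "m \<le> card Z" "\<And>z. z \<in> Z \<Longrightarrow> (\<Sum>j<m. a j * poly (b j) z) = 0" "j < m"
  shows "a j = 0"
proof (rule sum_smult_triangular_eq_0D[OF assms(1,2) _ assms(6)])
  let ?p = "\<Sum>j<m. smult (a j) (b j)"
  have "degree ?p \<le> m - 1"
    by (rule degree_sum_le) (use assms(1) in \<open>auto intro: order.trans[OF degree_smult_le]\<close>)
  then have "degree ?p < m"
    using assms(6) by linarith
  moreover have "poly ?p z = poly 0 z" if "z \<in> Z" for z
    using assms(5)[OF that] by (simp add: poly_sum)
  ultimately show "?p = 0"
    using assms(4) by (intro poly_eqI_degree[of Z]) auto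
qed

text \<open>The \<open>j\<close>-th iterate multiplies \<open>x\<^sup>\<mu>\<close> by \<open>poly (op_poly D j) (op_var D \<mu>)\<close>, i.e. by
  \<open>\<mu>(\<mu>-1)\<cdots>(\<mu>-j+1)\<close>, \<open>\<mu>\<^sup>j\<close> or \<open>(q\<^sup>\<mu>)\<^sup>j\<close>, and lowers the exponent by \<open>op_shift D * j\<close>.\<close>

definition op_shift :: "gop \<Rightarrow> real" where
  "op_shift D = (case D of Deriv \<Rightarrow> 1 | _ \<Rightarrow> 0)"

definition op_var :: "gop \<Rightarrow> real \<Rightarrow> complex" where
  "op_var D \<mu> = (case D of QDiff q \<Rightarrow> exp (complex_of_real \<mu> * Ln q) | _ \<Rightarrow> complex_of_real \<mu>)"

definition op_poly :: "gop \<Rightarrow> nat \<Rightarrow> complex poly" where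
  "op_poly D j = (case D of Deriv \<Rightarrow> (\<Prod>i<j. [:- of_nat i, 1:]) | _ \<Rightarrow> monom 1 j)"

lemma gs_op_iterate:
  "(gs_op D ^^ j) s \<rho> = poly (op_poly D j) (op_var D (\<rho> + op_shift D * j)) * s (\<rho> + op_shift D * j)"
proof (cases D)
  case Deriv
  show ?thesis
  proof (induction j arbitrary: \<rho>)
    case (Suc j)
    have "poly (op_poly D (Suc j)) (op_var D (\<rho> + op_shift D * Suc j)) =
        complex_of_real (\<rho> + 1) * poly (op_poly D j) (op_var D (\<rho> + 1 + op_shift D * j))"
      by (simp add: Deriv op_poly_def op_var_def op_shift_def algebra_simps)
    with Suc[of "\<rho> + 1"] show ?case
      by (simp add: Deriv op_shift_def algebra_simps)
  qed (simp add: Deriv op_poly_def)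
next
  case Euler
  then show ?thesis
    by (induction j arbitrary: \<rho>) (simp_all add: op_poly_def op_var_def op_shift_def poly_monom)
next
  case (QDiff q)
  then show ?thesis
    by (induction j arbitrary: \<rho>) (simp_all add: op_poly_def op_var_def op_shift_def poly_monom)
qed

lemma op_shift_mult_Rats: "op_shift D * real j \<in> \<rat>"
  by (simp add: op_shift_def split: gop.split)

lemma degree_op_poly: "degree (op_poly D j) = j"
  and op_poly_nonzero: "op_poly D j \<noteq> 0"
  by (simp_all add: op_poly_def degree_prod_eq_sum_degree degree_monom_eq split: gop.split)

lemma inj_op_var:
  assumes "admissible_op D"
  shows "inj (op_var D)"
proof (cases D)
  case (QDiff q)
  then have "ln (cmod q) \<noteq> 0"
    using assms by (simp add: admissible_op_def)
  moreover have norm_op_var: "norm (op_var D x) = exp (x * ln (cmod q))" for x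
    using QDiff assms by (simp add: admissible_op_def op_var_def norm_exp_eq_Re)
  ultimately show ?thesis
  proof (intro injI)
    fix x y assume "op_var D x = op_var D y"
    then have "exp (x * ln (cmod q)) = exp (y * ln (cmod q))"
      by (simp flip: norm_op_var)
    with \<open>ln (cmod q) \<noteq> 0\<close> show "x = y"
      by simp
  qed
qed (simp_all add: op_var_def inj_def)

lemma gs_op_iterate_Omega: "s \<in> Omega \<Longrightarrow> (gs_op D ^^ j) s \<in> Omega"
  unfolding gs_op_iterate[abs_def] by (rule Omega_shift)

section \<open>Separation of the iterates\<close>

definition lowest_exponent :: "omega \<Rightarrow> real" where
  "lowest_exponent a = (LEAST \<mu>. Rep_omega a \<mu> \<noteq> 0)"

lemma lowest_exponent_is_least:
  assumes "a \<noteq> 0"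
  shows "Rep_omega a (lowest_exponent a) \<noteq> 0" "Rep_omega a \<mu> \<noteq> 0 \<Longrightarrow> lowest_exponent a \<le> \<mu>"
proof -
  obtain \<mu>\<^sub>1 where "Rep_omega a \<mu>\<^sub>1 \<noteq> 0"
    using assms Rep_omega_eq_0_iff[of a] by (auto simp: gs_zero_def)
  then obtain \<mu>\<^sub>0 where "Rep_omega a \<mu>\<^sub>0 \<noteq> 0" "\<And>\<mu>. Rep_omega a \<mu> \<noteq> 0 \<Longrightarrow> \<mu>\<^sub>0 \<le> \<mu>"
    using Omega_has_least_exponent[OF Rep_omega] by metis
  moreover from this have "lowest_exponent a = \<mu>\<^sub>0"
    unfolding lowest_exponent_def by (rule Least_equality)
  ultimately show "Rep_omega a (lowest_exponent a) \<noteq> 0" "Rep_omega a \<mu> \<noteq> 0 \<Longrightarrow> lowest_exponent a \<le> \<mu>"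
    by simp_all
qed

lemma common_lower_exponent:
  fixes Q :: "nat \<Rightarrow> omega" and c :: "nat \<Rightarrow> real"
  assumes "\<exists>k<m. Q k \<noteq> 0"
  obtains w k where "k < m" "Rep_omega (Q k) (w + c k) \<noteq> 0"
    "\<forall>j<m. \<forall>\<mu>. Rep_omega (Q j) \<mu> \<noteq> 0 \<longrightarrow> w + c j \<le> \<mu>"
proof -
  let ?J = "{j. j < m \<and> Q j \<noteq> 0}"
  define w where "w = Min ((\<lambda>j. lowest_exponent (Q j) - c j) ` ?J)"
  have "w \<in> (\<lambda>j. lowest_exponent (Q j) - c j) ` ?J"
    unfolding w_def using assms by (intro Min_in) auto
  then obtain k where k: "k < m" "Q k \<noteq> 0" "w = lowest_exponent (Q k) - c k"
    by blast
  show ?thesis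
  proof (rule that)
    show "Rep_omega (Q k) (w + c k) \<noteq> 0"
      using k lowest_exponent_is_least(1) by simp
    show "\<forall>j<m. \<forall>\<mu>. Rep_omega (Q j) \<mu> \<noteq> 0 \<longrightarrow> w + c j \<le> \<mu>"
    proof (intro allI impI)
      fix j \<mu> assume that: "j < m" "Rep_omega (Q j) \<mu> \<noteq> 0"
      have "Q j \<noteq> 0"
        using that(2) by (auto simp: zero_omega.rep_eq gs_zero_def)
      then have "w \<le> lowest_exponent (Q j) - c j"
        unfolding w_def using that(1) by (intro Min_le) auto
      with lowest_exponent_is_least(2)[OF \<open>Q j \<noteq> 0\<close> that(2)] show "w + c j \<le> \<mu>"
        by simp
    qed
  qed (use k in simp)
qed

text \<open>Only the term of the iterate at exponent \<open>\<nu>\<^sub>0 - op_shift D * j\<close> contributes: \<open>l\<close> kills the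
  smaller exponents of \<open>s\<close> (the shift is rational), and \<open>q\<close> has no exponent below \<open>w + op_shift D * j\<close>.\<close>

lemma Rep_omega_mult_weight_deriv_iterate:
  fixes q :: omega
  assumes s: "s \<in> Omega"
    and l_add: "\<And>x y. l (x + y) = l x + l y" and l_Rats: "\<And>r. r \<in> \<rat> \<Longrightarrow> l r = 0"
    and l_below: "\<And>\<nu>. s \<nu> \<noteq> 0 \<Longrightarrow> \<nu> < \<nu>\<^sub>0 \<Longrightarrow> l \<nu> = 0"
    and q_low: "\<And>\<mu>. Rep_omega q \<mu> \<noteq> 0 \<Longrightarrow> w + op_shift D * j \<le> \<mu>"
  shows "Rep_omega (q * weight_deriv l (Abs_omega ((gs_op D ^^ j) s))) (w + \<nu>\<^sub>0) =
    Rep_omega q (w + op_shift D * j) * (l \<nu>\<^sub>0 * poly (op_poly D j) (op_var D \<nu>\<^sub>0) * s \<nu>\<^sub>0)"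
proof -
  define c where "c = op_shift D * j"
  define g where "g = (\<lambda>\<rho>. complex_of_real (l \<rho>) * (gs_op D ^^ j) s \<rho>)"
  have l_shift: "l (\<rho> + c) = l \<rho>" for \<rho>
    using l_add[of \<rho> c] l_Rats[OF op_shift_mult_Rats] by (simp add: c_def)
  have g_nonzero: "l \<rho> \<noteq> 0 \<and> s (\<rho> + c) \<noteq> 0" if "g \<rho> \<noteq> 0" for \<rho>
    using that by (auto simp: g_def gs_op_iterate c_def)
  have "Rep_omega (q * weight_deriv l (Abs_omega ((gs_op D ^^ j) s))) (w + \<nu>\<^sub>0) = gs_mult (Rep_omega q) g (w + \<nu>\<^sub>0)"
    using gs_op_iterate_Omega[OF s]
    by (simp add: times_omega.rep_eq weight_deriv.rep_eq Abs_omega_inverse g_def)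
  also have "\<dots> = (\<Sum>\<nu>\<in>{w + c}. Rep_omega q \<nu> * g (w + \<nu>\<^sub>0 - \<nu>))"
  proof (rule gs_mult_eq_sum, simp, rule subsetI)
    fix \<nu> assume "\<nu> \<in> {\<nu>. Rep_omega q \<nu> \<noteq> 0 \<and> g (w + \<nu>\<^sub>0 - \<nu>) \<noteq> 0}"
    then have "w + c \<le> \<nu>" "l (w + \<nu>\<^sub>0 - \<nu>) \<noteq> 0" "s (w + \<nu>\<^sub>0 - \<nu> + c) \<noteq> 0"
      using q_low g_nonzero unfolding c_def by blast+
    moreover from this have "\<not> w + \<nu>\<^sub>0 - \<nu> + c < \<nu>\<^sub>0"
      using l_below l_shift by metis
    ultimately show "\<nu> \<in> {w + c}"
      by simp
  qed
  also have "\<dots> = Rep_omega q (w + c) * (l \<nu>\<^sub>0 * poly (op_poly D j) (op_var D \<nu>\<^sub>0) * s \<nu>\<^sub>0)"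
    using l_shift[of "\<nu>\<^sub>0 - c"] by (simp add: g_def gs_op_iterate c_def)
  finally show ?thesis
    unfolding c_def .
qed

lemma new_exponent_weight_deriv:
  fixes Q :: "nat \<Rightarrow> omega"
  assumes s: "s \<in> Omega" and new: "\<nu>\<^sub>0 \<in> new_exponents s"
    and low: "\<forall>j<m. \<forall>\<mu>. Rep_omega (Q j) \<mu> \<noteq> 0 \<longrightarrow> w + op_shift D * j \<le> \<mu>"
  obtains \<delta> where "\<delta> \<in> weight_derivs_mod_Q"
    "Rep_omega (\<Sum>j<m. Q j * \<delta> (Abs_omega ((gs_op D ^^ j) s))) (w + \<nu>\<^sub>0) =
       (\<Sum>j<m. Rep_omega (Q j) (w + op_shift D * j) * poly (op_poly D j) (op_var D \<nu>\<^sub>0)) * s \<nu>\<^sub>0"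
proof -
  have not_in_span: "\<nu>\<^sub>0 \<notin> Q.span (\<rat> \<union> {\<nu> \<in> gsupp s. \<nu> < \<nu>\<^sub>0})"
    using new by (simp add: new_exponents_def)
  obtain l :: "real \<Rightarrow> real" where l: "\<And>x y. l (x + y) = l x + l y"
    "\<And>u. u \<in> \<rat> \<union> {\<nu> \<in> gsupp s. \<nu> < \<nu>\<^sub>0} \<Longrightarrow> l u = 0" "l \<nu>\<^sub>0 = 1"
    using exists_additive_functional[OF not_in_span] by blast
  have l_Rats: "l r = 0" if "r \<in> \<rat>" for r
    using l(2) that by blast
  have l_below: "l \<nu> = 0" if "s \<nu> \<noteq> 0" "\<nu> < \<nu>\<^sub>0" for \<nu>
    using l(2) that by (simp add: gsupp_def)
  have coeff: "Rep_omega (Q j * weight_deriv l (Abs_omega ((gs_op D ^^ j) s))) (w + \<nu>\<^sub>0) =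
      Rep_omega (Q j) (w + op_shift D * j) * (l \<nu>\<^sub>0 * poly (op_poly D j) (op_var D \<nu>\<^sub>0) * s \<nu>\<^sub>0)"
    if "j < m" for j
    by (rule Rep_omega_mult_weight_deriv_iterate[OF s l(1) l_Rats l_below low[rule_format, OF that]])
  show ?thesis
  proof (rule that)
    show "weight_deriv l \<in> weight_derivs_mod_Q"
      unfolding weight_derivs_mod_Q_def using l(1) l_Rats by blast
    have "Rep_omega (\<Sum>j<m. Q j * weight_deriv l (Abs_omega ((gs_op D ^^ j) s))) (w + \<nu>\<^sub>0) =
        (\<Sum>j<m. Rep_omega (Q j) (w + op_shift D * j) * (l \<nu>\<^sub>0 * poly (op_poly D j) (op_var D \<nu>\<^sub>0) * s \<nu>\<^sub>0))"
      unfolding Rep_omega_sum by (intro sum.cong refl coeff) simp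
    also have "\<dots> = (\<Sum>j<m. Rep_omega (Q j) (w + op_shift D * j) * poly (op_poly D j) (op_var D \<nu>\<^sub>0)) * s \<nu>\<^sub>0"
      unfolding sum_distrib_right by (simp add: l(3) mult_ac)
    finally show "Rep_omega (\<Sum>j<m. Q j * weight_deriv l (Abs_omega ((gs_op D ^^ j) s))) (w + \<nu>\<^sub>0) =
        (\<Sum>j<m. Rep_omega (Q j) (w + op_shift D * j) * poly (op_poly D j) (op_var D \<nu>\<^sub>0)) * s \<nu>\<^sub>0" .
  qed
qed

lemma iterates_separated_by_weight_derivs:
  assumes D: "admissible_op D" and s: "s \<in> Omega" and dim: "dim_mod_Q_gt (gsupp s) n"
    and Q: "\<exists>k<Suc n. Q k \<noteq> 0"
  shows "\<exists>\<delta>\<in>weight_derivs_mod_Q. (\<Sum>j<Suc n. Q j * \<delta> (Abs_omega ((gs_op D ^^ j) s))) \<noteq> 0"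
proof (rule ccontr)
  assume vanish: "\<not> ?thesis"
  obtain N where N: "N \<subseteq> new_exponents s" "finite N" "card N = Suc n"
    using new_exponents_card[OF s dim] .
  obtain w k where k: "k < Suc n" "Rep_omega (Q k) (w + op_shift D * k) \<noteq> 0"
    and low: "\<forall>j<Suc n. \<forall>\<mu>. Rep_omega (Q j) \<mu> \<noteq> 0 \<longrightarrow> w + op_shift D * j \<le> \<mu>"
    by (rule common_lower_exponent[OF Q, of "\<lambda>j. op_shift D * j"]) blast+
  define a where "a j = Rep_omega (Q j) (w + op_shift D * j)" for j
  have "a k = 0"
  proof (rule sum_poly_vanishing_eq_0[OF degree_op_poly op_poly_nonzero])
    show "finite (op_var D ` N)"
      using N(2) by simp
    show "Suc n \<le> card (op_var D ` N)"
      using inj_on_subset[OF inj_op_var[OF D]] N(3) by (simp add: card_image)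
    show "(\<Sum>j<Suc n. a j * poly (op_poly D j) z) = 0" if z: "z \<in> op_var D ` N" for z
    proof -
      obtain \<nu>\<^sub>0 where \<nu>\<^sub>0: "\<nu>\<^sub>0 \<in> new_exponents s" "z = op_var D \<nu>\<^sub>0"
        using z N(1) by blast
      then have "s \<nu>\<^sub>0 \<noteq> 0"
        by (simp add: new_exponents_def gsupp_def)
      obtain \<delta> where \<delta>: "\<delta> \<in> weight_derivs_mod_Q"
        "Rep_omega (\<Sum>j<Suc n. Q j * \<delta> (Abs_omega ((gs_op D ^^ j) s))) (w + \<nu>\<^sub>0) =
          (\<Sum>j<Suc n. a j * poly (op_poly D j) (op_var D \<nu>\<^sub>0)) * s \<nu>\<^sub>0"
        unfolding a_def by (rule new_exponent_weight_deriv[OF s \<nu>\<^sub>0(1) low])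
      have "(\<Sum>j<Suc n. Q j * \<delta> (Abs_omega ((gs_op D ^^ j) s))) = 0"
        using vanish \<delta>(1) by blast
      then have "(\<Sum>j<Suc n. a j * poly (op_poly D j) (op_var D \<nu>\<^sub>0)) * s \<nu>\<^sub>0 = 0"
        using \<delta>(2) by (simp add: zero_omega.rep_eq gs_zero_def)
      with \<open>s \<nu>\<^sub>0 \<noteq> 0\<close> \<nu>\<^sub>0(2) show ?thesis
        by simp
    qed
  qed (rule k(1))
  with k(2) show False
    by (simp add: a_def)
qed

lemma diff_poly_is_mpoly:
  assumes "diff_poly n P"
  shows "is_mpoly (Suc n) {c. \<forall>\<delta>\<in>weight_derivs_mod_Q. \<delta> c = 0} (\<lambda>\<alpha>. Abs_omega (P \<alpha>))"
proof -
  have "P \<alpha> \<in> Omega" for \<alpha>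
    using assms Puiseux_subset_Omega unfolding diff_poly_def by blast
  then have "Abs_omega (P \<alpha>) = 0 \<longleftrightarrow> P \<alpha> = gs_zero" for \<alpha>
    by (rule Abs_omega_eq_0_iff)
  then show ?thesis
    using assms weight_derivs_mod_Q_Puiseux unfolding is_mpoly_def diff_poly_def by auto
qed

lemma foldr_gs_mult_gs_pow:
  "foldr (\<lambda>i acc. gs_mult (gs_pow (Rep_omega (Y i)) (\<alpha> i)) acc) xs (Rep_omega c) =
    Rep_omega ((\<Prod>i\<leftarrow>xs. Y i ^ \<alpha> i) * c)"
  by (induction xs) (simp_all add: gs_pow_Rep_omega times_omega.rep_eq mult.assoc)

lemma eval_diff_poly_eq_mpoly_eval:
  assumes "s \<in> Omega" "\<And>\<alpha>. P \<alpha> \<in> Omega"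
  shows "eval_diff_poly D n P s =
    Rep_omega (mpoly_eval (Suc n) (\<lambda>\<alpha>. Abs_omega (P \<alpha>)) (\<lambda>i. Abs_omega ((gs_op D ^^ i) s)))"
proof -
  let ?Y = "\<lambda>i. Abs_omega ((gs_op D ^^ i) s)"
  have Rep: "Rep_omega (?Y i) = (gs_op D ^^ i) s" "Rep_omega (Abs_omega (P \<alpha>)) = P \<alpha>" for i \<alpha>
    using assms gs_op_iterate_Omega by (simp_all add: Abs_omega_inverse)
  have supp: "{\<alpha>. Abs_omega (P \<alpha>) \<noteq> 0} = {\<alpha>. P \<alpha> \<noteq> gs_zero}"
    using assms(2) Abs_omega_eq_0_iff by blast
  have "(\<Prod>i\<leftarrow>[0..<Suc n]. f i) = (\<Prod>i<Suc n. f i)" for f :: "nat \<Rightarrow> omega"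
    by (simp add: prod.distinct_set_conv_list[symmetric] atLeast0LessThan)
  then have fold: "foldr (\<lambda>i acc. gs_mult (gs_pow ((gs_op D ^^ i) s) (\<alpha> i)) acc) [0..<Suc n] (P \<alpha>) =
      Rep_omega ((\<Prod>i<Suc n. ?Y i ^ \<alpha> i) * Abs_omega (P \<alpha>))" for \<alpha>
    using foldr_gs_mult_gs_pow[of ?Y \<alpha> "[0..<Suc n]" "Abs_omega (P \<alpha>)"] by (simp only: Rep)
  show ?thesis
    unfolding eval_diff_poly_def fold mpoly_eval_def supp Rep_omega_sum by (simp add: mult.commute)
qed

theorem corollary1:
  fixes D :: gop and s :: gser and n :: nat and P :: "(nat \<Rightarrow> nat) \<Rightarrow> gser"
  assumes "admissible_op D"
    and "s \<in> Omega"
    and "dim_mod_Q_gt (gsupp s) n"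
    and "diff_poly n P"
    and "\<exists>\<alpha>. P \<alpha> \<noteq> gs_zero"
  shows "eval_diff_poly D n P s \<noteq> gs_zero"
proof -
  have P_Omega: "P \<alpha> \<in> Omega" for \<alpha>
    using assms(4) Puiseux_subset_Omega unfolding diff_poly_def by blast
  obtain \<alpha>\<^sub>0 where "Abs_omega (P \<alpha>\<^sub>0) \<noteq> 0"
    using assms(5) P_Omega Abs_omega_eq_0_iff by blast
  have "mpoly_eval (Suc n) (\<lambda>\<alpha>. Abs_omega (P \<alpha>)) (\<lambda>i. Abs_omega ((gs_op D ^^ i) s)) \<noteq> 0"
    using omega_torsion_free derivation_weight_derivs_mod_Q iterates_separated_by_weight_derivs[OF assms(1-3)]
      diff_poly_is_mpoly[OF assms(4)] \<open>Abs_omega (P \<alpha>\<^sub>0) \<noteq> 0\<close>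
    by (rule mpoly_eval_neq_0_if_separating)
  then show ?thesis
    by (simp add: eval_diff_poly_eq_mpoly_eval[OF assms(2) P_Omega] Rep_omega_eq_0_iff)
qed

end
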